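(* Let $S$ be a $\tau$-mutation system over $\mathcal{A}=\{a_0,\dots,a_{d-1}\}$ with starting word $w$ of length $m$, fix $k\in\mathbb{N}$ with $m\ge k$, and let $\mathbf{M}^{(k)}$ be the $k$-substitution matrix. Then for every $n\in\mathbb{N}$, \[\mathbb{E}\big[\mathbf{fr}^{(k)}_{S(n)}\big]=\frac{\mathbb{E}\big[\mathbf{ct}^{(k)}_{S(n)}\big]}{m+n(\tau-1)}=\frac{1}{m+n(\tau-1)}\prod_{j=0}^{n-1}\frac{1}{m+j(\tau-1)}\Big(\mathbf{M}^{(k)}+(m+j(\tau-1)-k)\mathbf{I}\Big)\mathbf{ct}^{(k)}_w .\]
   Context: Let $\mathcal{A}=\{a_0,\dots,a_{d-1}\}$ be a finite alphabet and $\mathcal{A}^\star$ the set of finite nonempty words. A mutation law assigns to each $a_t$ a finitely supported probability distribution $\mathbb{P}_{a_t}$ on $\mathcal{A}^\star$; $\vartheta(a_t)$ is a random word with law $\mathbb{P}_{a_t}$; it is a $\tau$-mutation law if every $\mathbb{P}_{a_t}$ is supported on $\mathcal{A}^\tau$. A mutation step on $w=w_0\cdots w_{m-1}$ picks $i$ uniformly in $\{0,\dots,m-1\}$ and replaces $w_i$ by an independent sample of $\vartheta(w_i)$. A mutation system: $S(0)=w$, $S(n)=\vartheta(S(n-1))$ with independent randomness at each step. $\mathrm{ct}_v(u)$ is the number of $i\in\{0,\dots,|v|-1\}$ with $v_i\cdots v_{i+|u|-1}=u$ (indices cyclic mod $|v|$); $\mathbf{ct}^{(k)}_v=(\mathrm{ct}_v(u))_{u\in\mathcal{A}^k}$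 in lexicographic order, $\mathbf{fr}^{(k)}_v=\mathbf{ct}^{(k)}_v/|v|$. The $k$-substitution matrix $\mathbf{M}^{(k)}$ is the $d^k\times d^k$ matrix with \[\mathbf{M}^{(k)}_{u,v}=\sum_{l\ge1}\sum_{\eta\in\mathcal{A}^l}\sum_{t\in[d]}\Pr(\vartheta(a_t)=\eta)\Big(\sum_{j=1}^{k-1}\mathbb{1}[v_j=a_t]\,\mathbb{1}\big[(v_0\cdots v_{j-1}\eta v_{j+1}\cdots v_{k-1})_{[k]}=u\big]+\sum_{j=0}^{l-1}\mathbb{1}[v_0=a_t]\,\mathbb{1}\big[(\eta v_1\cdots v_{k-1})_{j+[k]}=u\big]\Big),\] where $x_{j+[k]}=x_j\cdots x_{j+k-1}$ and $x_{[k]}$ is the first $k$ symbols of $x$. *)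

theory Defs
  imports "HOL-Probability.Probability"
begin

(* Alphabet A = {a_0,...,a_{d-1}} is encoded as {0..<d} (a_t = t); words are nat lists. *)

definition words :: "nat \<Rightarrow> nat \<Rightarrow> nat list set" where
  "words d k = {u. length u = k \<and> set u \<subseteq> {..<d}}"

definition mutation_law :: "nat \<Rightarrow> (nat \<Rightarrow> nat list pmf) \<Rightarrow> bool" where
  "mutation_law d P \<longleftrightarrow> (\<forall>t<d. finite (set_pmf (P t)) \<and>
      (\<forall>\<eta>\<in>set_pmf (P t). \<eta> \<noteq> [] \<and> set \<eta> \<subseteq> {..<d}))"

definition tau_mutation_law :: "nat \<Rightarrow> nat \<Rightarrow> (nat \<Rightarrow> nat list pmf) \<Rightarrow> bool" where
  "tau_mutation_law d \<tau> P \<longleftrightarrow> mutation_law d P \<and>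
      (\<forall>t<d. \<forall>\<eta>\<in>set_pmf (P t). length \<eta> = \<tau>)"

definition mutation_step :: "(nat \<Rightarrow> nat list pmf) \<Rightarrow> nat list \<Rightarrow> nat list pmf" where
  "mutation_step P w = bind_pmf (pmf_of_set {..<length w})
      (\<lambda>i. map_pmf (\<lambda>\<eta>. take i w @ \<eta> @ drop (Suc i) w) (P (w ! i)))"

primrec mutation_system :: "(nat \<Rightarrow> nat list pmf) \<Rightarrow> nat list \<Rightarrow> nat \<Rightarrow> nat list pmf" where
  "mutation_system P w 0 = return_pmf w"
| "mutation_system P w (Suc n) = bind_pmf (mutation_system P w n) (mutation_step P)"

definition ct :: "nat list \<Rightarrow> nat list \<Rightarrow> nat" where
  "ct v u = card {i. i < length v \<and> (\<forall>j<length u. v ! ((i + j) mod length v) = u ! j)}"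

definition fr :: "nat list \<Rightarrow> nat list \<Rightarrow> real" where
  "fr v u = real (ct v u) / real (length v)"

type_synonym wmat = "nat list \<Rightarrow> nat list \<Rightarrow> real"
type_synonym wvec = "nat list \<Rightarrow> real"

definition wmat_mult :: "nat \<Rightarrow> nat \<Rightarrow> wmat \<Rightarrow> wmat \<Rightarrow> wmat" where
  "wmat_mult d k A B = (\<lambda>u v. \<Sum>x\<in>words d k. A u x * B x v)"

definition wmat_vec :: "nat \<Rightarrow> nat \<Rightarrow> wmat \<Rightarrow> wvec \<Rightarrow> wvec" where
  "wmat_vec d k A x = (\<lambda>u. \<Sum>v\<in>words d k. A u v * x v)"

definition wmat_id :: wmat where
  "wmat_id = (\<lambda>u v. if u = v then 1 else 0)"

primrec wmat_prod :: "nat \<Rightarrow> nat \<Rightarrow> (nat \<Rightarrow> wmat) \<Rightarrow> nat \<Rightarrow> wmat" where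
  "wmat_prod d k A 0 = wmat_id"
| "wmat_prod d k A (Suc n) = wmat_mult d k (wmat_prod d k A n) (A n)"

definition subst_matrix :: "nat \<Rightarrow> nat \<Rightarrow> (nat \<Rightarrow> nat list pmf) \<Rightarrow> wmat" where
  "subst_matrix d k P = (\<lambda>u v. \<Sum>t<d. \<Sum>\<eta>\<in>set_pmf (P t). pmf (P t) \<eta> *
     ( (\<Sum>j\<in>{1..k-1}. if v ! j = t \<and> take k (take j v @ \<eta> @ drop (Suc j) v) = u then 1 else 0)
     + (\<Sum>j<length \<eta>. if v ! 0 = t \<and> take k (drop j (\<eta> @ drop 1 v)) = u then 1 else 0)))"

end

theory Submission
  imports Defs
begin

text \<open>
  Occurrences of \<open>u\<close> are counted through the cyclic windows of length \<open>k\<close>. Replacing the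
  letter at position \<open>i\<close> by \<open>\<eta>\<close> destroys the \<open>k\<close> windows that cover position \<open>i\<close> and creates
  the windows of the new word that meet \<open>\<eta>\<close>: those entering \<open>\<eta>\<close> at an inner offset
  \<open>j \<in> {1..k-1}\<close> and those starting inside \<open>\<eta>\<close>. These are exactly the two sums in the
  definition of the substitution matrix, so averaging over the uniform position and the law of
  \<open>\<eta>\<close> gives \<open>|v| E[ct] = (|v| - k) ct v + M (ct v)\<close>. Every step lengthens the word by
  \<open>\<tau> - 1\<close>, so the expected count vector satisfies
  \<open>E[ct (n+1)] = (M + (m n - k) I) E[ct n] / m n\<close> with \<open>m n = m + n (\<tau> - 1)\<close>; all
  factors are polynomials in \<open>M\<close> and commute, which turns the iterated recursion into the
  ordered product of the statement.
\<close>

section \<open>Cyclic windows\<close>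

definition cyclic_nth :: "nat list \<Rightarrow> nat \<Rightarrow> nat" where
  "cyclic_nth v n = v ! (n mod length v)"

definition cyclic_window :: "nat \<Rightarrow> nat list \<Rightarrow> nat \<Rightarrow> nat list" where
  "cyclic_window k v p = map (\<lambda>h. cyclic_nth v (p + h)) [0..<k]"

lemma cyclic_nth_add_length [simp]: "cyclic_nth v (n + length v) = cyclic_nth v n"
  by (simp add: cyclic_nth_def)

lemma cyclic_nth_in_set: "v \<noteq> [] \<Longrightarrow> cyclic_nth v n \<in> set v"
  by (simp add: cyclic_nth_def)

lemma length_cyclic_window [simp]: "length (cyclic_window k v p) = k"
  by (simp add: cyclic_window_def)

lemma nth_cyclic_window [simp]: "h < k \<Longrightarrow> cyclic_window k v p ! h = cyclic_nth v (p + h)"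
  by (simp add: cyclic_window_def)

lemma cyclic_window_add_length [simp]: "cyclic_window k v (p + length v) = cyclic_window k v p"
proof -
  have "cyclic_nth v (p + length v + h) = cyclic_nth v (p + h)" for h
    using cyclic_nth_add_length[of v "p + h"] by (simp add: ac_simps)
  then show ?thesis by (simp add: cyclic_window_def)
qed

lemma cyclic_window_in_words:
  "set v \<subseteq> {..<d} \<Longrightarrow> v \<noteq> [] \<Longrightarrow> cyclic_window k v p \<in> words d k"
  unfolding words_def cyclic_window_def using cyclic_nth_in_set by fastforce

lemma finite_words: "finite (words d k)"
  using finite_lists_length_eq[of "{..<d}" k] unfolding words_def by (simp add: conj_commute)

lemma ct_eq_sum_cyclic_window:
  assumes "length u = k"
  shows "real (ct v u) = (\<Sum>p<length v. of_bool (cyclic_window k v p = u))"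
proof -
  have "{i. i < length v \<and> (\<forall>j<length u. v ! ((i + j) mod length v) = u ! j)}
      = {..<length v} \<inter> {p. cyclic_window k v p = u}"
    using assms by (auto simp: list_eq_iff_nth_eq cyclic_nth_def)
  then show ?thesis by (simp add: ct_def sum.If_cases)
qed

lemma sum_words_mult_ct:
  fixes f :: "nat list \<Rightarrow> real"
  assumes "\<And>p. cyclic_window k v p \<in> words d k"
  shows "(\<Sum>x\<in>words d k. f x * real (ct v x)) = (\<Sum>p<length v. f (cyclic_window k v p))"
proof -
  have "(\<Sum>x\<in>words d k. f x * real (ct v x))
      = (\<Sum>x\<in>words d k. \<Sum>p<length v. if cyclic_window k v p = x then f x else 0)"
    by (intro sum.cong refl)
       (simp add: ct_eq_sum_cyclic_window words_def sum_distrib_left of_bool_def if_distrib cong: if_cong)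
  also have "\<dots> = (\<Sum>p<length v. f (cyclic_window k v p))"
    using assms finite_words by (subst sum.swap) (simp add: sum.delta)
  finally show ?thesis .
qed

lemma sum_lessThan_shift_periodic:
  fixes g :: "nat \<Rightarrow> 'a::comm_monoid_add"
  assumes "\<And>p. g (p + L) = g p"
  shows "(\<Sum>p<L. g (p + s)) = (\<Sum>p<L. g p)"
proof (induction s)
  case (Suc s)
  show ?case
  proof (cases L)
    case (Suc L')
    have "(\<Sum>p<L. g (p + Suc s)) = (\<Sum>p<L'. g (Suc p + s)) + g (Suc L' + s)"
      using Suc by (simp only: sum.lessThan_Suc) simp
    also have "g (Suc L' + s) = g s" using assms[of s] Suc by (simp add: add.commute)
    also have "(\<Sum>p<L'. g (Suc p + s)) + g s = (\<Sum>p<L. g (p + s))"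
      using Suc by (simp only: sum.lessThan_Suc_shift add.commute) simp
    finally show ?thesis using Suc.IH by simp
  qed simp
qed simp

lemma sum_lessThan_add:
  fixes f :: "nat \<Rightarrow> 'a::comm_monoid_add"
  shows "(\<Sum>t<a + b. f t) = (\<Sum>t<a. f t) + (\<Sum>t<b. f (a + t))"
  by (induction b) (simp_all add: add.assoc)

lemma sum_lessThan_pred_reflect:
  fixes f :: "nat \<Rightarrow> 'a::comm_monoid_add"
  shows "(\<Sum>s<k - 1. f s) = (\<Sum>j\<in>{1..k-1}. f (k - 1 - j))"
  by (rule sum.reindex_bij_witness[where i="\<lambda>j. k - 1 - j" and j="\<lambda>s. k - 1 - s"]) auto

lemma sum_cyclic_nth_reindex:
  fixes G :: "nat \<Rightarrow> nat \<Rightarrow> 'a::comm_monoid_add"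
  assumes periodic: "\<And>p a. G (p + length v) a = G p a" and "j \<le> length v"
  shows "(\<Sum>p<length v. G p (cyclic_nth v (p + j))) = (\<Sum>i<length v. G (i + length v - j) (v ! i))"
proof -
  have "(\<Sum>p<length v. G p (cyclic_nth v (p + j)))
      = (\<Sum>i<length v. G (i + (length v - j)) (cyclic_nth v (i + (length v - j) + j)))"
  proof (rule sum_lessThan_shift_periodic[symmetric])
    fix p
    have "cyclic_nth v (p + length v + j) = cyclic_nth v (p + j)"
      using cyclic_nth_add_length[of v "p + j"] by (simp add: ac_simps)
    then show "G (p + length v) (cyclic_nth v (p + length v + j)) = G p (cyclic_nth v (p + j))"
      by (simp add: periodic)
  qed
  also have "\<dots> = (\<Sum>i<length v. G (i + length v - j) (v ! i))"
    using assms(2) by (intro sum.cong refl) (simp add: cyclic_nth_def)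
  finally show ?thesis .
qed

text \<open>
  The window starting at \<open>i + |v| - j\<close> has \<open>v ! i\<close> at offset \<open>j\<close>. The two sums of
  \<open>new_windows\<close> are the two sums of \<open>subst_matrix\<close>, evaluated at the old window.
\<close>

definition lost_windows :: "nat \<Rightarrow> nat list \<Rightarrow> nat \<Rightarrow> nat list \<Rightarrow> real" where
  "lost_windows k v i u = (\<Sum>j<k. of_bool (cyclic_window k v (i + length v - j) = u))"

definition new_windows :: "nat \<Rightarrow> nat list \<Rightarrow> nat \<Rightarrow> nat list \<Rightarrow> nat list \<Rightarrow> real" where
  "new_windows k v i \<eta> u =
     (\<Sum>j\<in>{1..k-1}. let x = cyclic_window k v (i + length v - j) in
        of_bool (take k (take j x @ \<eta> @ drop (Suc j) x) = u))
   + (\<Sum>j<length \<eta>. of_bool (take k (drop j (\<eta> @ drop 1 (cyclic_window k v i))) = u))"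

lemma sum_cyclic_window_split:
  assumes "k \<le> length v"
  shows "(\<Sum>p<length v. of_bool (cyclic_window k v p = u))
       = (\<Sum>t<length v - k. of_bool (cyclic_window k v (i + 1 + t) = u)) + lost_windows k v i u"
proof -
  define g where "g p = (of_bool (cyclic_window k v p = u) :: real)" for p
  have "(\<Sum>p<length v. g p) = (\<Sum>t<length v. g (t + (i + 1)))"
    by (rule sum_lessThan_shift_periodic[symmetric]) (simp add: g_def)
  also have "\<dots> = (\<Sum>t<length v - k. g (t + (i + 1))) + (\<Sum>t<k. g (length v - k + t + (i + 1)))"
    using assms sum_lessThan_add[of "\<lambda>t. g (t + (i + 1))" "length v - k" k] by (simp add: add.assoc)
  also have "(\<Sum>t<k. g (length v - k + t + (i + 1))) = (\<Sum>j<k. g (length v - k + (k - Suc j) + (i + 1)))"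
    by (rule sum.nat_diff_reindex[symmetric])
  also have "\<dots> = lost_windows k v i u"
  proof -
    have "length v - k + (k - Suc j) + (i + 1) = i + length v - j" if "j < k" for j
      using assms that by linarith
    then show ?thesis unfolding lost_windows_def g_def by (intro sum.cong refl) simp
  qed
  finally show ?thesis by (simp add: g_def add.commute)
qed

section \<open>Windows of a word after one substitution\<close>

locale single_mutation =
  fixes v \<eta> :: "nat list" and i :: nat
  assumes i_less: "i < length v" and eta_nonempty: "\<eta> \<noteq> []"
begin

definition mutated :: "nat list" where
  "mutated = take i v @ \<eta> @ drop (Suc i) v"

lemma length_eta_pos: "0 < length \<eta>"
  using eta_nonempty by simp

lemma length_mutated: "length mutated = length v - 1 + length \<eta>"
  using i_less by (simp add: mutated_def)

lemma cyclic_nth_mutated_inserted: "h < length \<eta> \<Longrightarrow> cyclic_nth mutated (i + h) = \<eta> ! h"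
  using i_less length_mutated by (simp add: cyclic_nth_def mutated_def nth_append)

lemma cyclic_nth_mutated_after:
  assumes "t < length v - 1"
  shows "cyclic_nth mutated (i + length \<eta> + t) = cyclic_nth v (i + 1 + t)"
proof (cases "i + 1 + t < length v")
  case True
  then show ?thesis
    using i_less length_mutated by (simp add: cyclic_nth_def mutated_def nth_append)
next
  case False
  have wrap: "(i + length \<eta> + t) mod length mutated = i + 1 + t - length v"
             "(i + 1 + t) mod length v = i + 1 + t - length v"
    using assms False i_less length_mutated eta_nonempty by (simp_all add: le_mod_geq)
  have "i + 1 + t - length v < i" using assms False by linarith
  then show ?thesis
    unfolding cyclic_nth_def wrap using i_less by (simp add: mutated_def nth_append)
qed

lemma cyclic_window_mutated_after:
  assumes "t < length v - k" "k \<le> length v"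
  shows "cyclic_window k mutated (i + length \<eta> + t) = cyclic_window k v (i + 1 + t)"
proof (rule nth_equalityI)
  fix h assume "h < length (cyclic_window k mutated (i + length \<eta> + t))"
  then have "h < k" by simp
  then show "cyclic_window k mutated (i + length \<eta> + t) ! h = cyclic_window k v (i + 1 + t) ! h"
    using assms cyclic_nth_mutated_after[of "t + h"] by (simp add: add.assoc)
qed simp

lemma cyclic_nth_mutated:
  assumes "r < length mutated"
  shows "cyclic_nth mutated (i + r)
       = (if r < length \<eta> then \<eta> ! r else cyclic_nth v (i + 1 + (r - length \<eta>)))"
proof (cases "r < length \<eta>")
  case False
  then have "i + r = i + length \<eta> + (r - length \<eta>)" "r - length \<eta> < length v - 1"
    using assms length_mutated by auto
  then show ?thesis using False by (simp only: cyclic_nth_mutated_after) simp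
qed (simp add: cyclic_nth_mutated_inserted)

text \<open>The start position is \<open>i - j\<close> modulo the length of \<open>mutated\<close>.\<close>

lemma cyclic_window_mutated_through:
  assumes "1 \<le> j" "j < k" "k \<le> length v"
  defines "x \<equiv> cyclic_window k v (i + length v - j)"
  shows "cyclic_window k mutated (i + length \<eta> + (length v - 1 - j))
       = take k (take j x @ \<eta> @ drop (Suc j) x)"
    (is "?A = take k ?B")
proof (rule nth_equalityI)
  have "k \<le> length ?B" using assms by (simp add: x_def) (use length_eta_pos in linarith)
  then show "length ?A = length (take k ?B)" by simp
next
  fix h assume "h < length ?A"
  then have h: "h < k" by simp
  let ?p = "i + length \<eta> + (length v - 1 - j) + h"
  have "cyclic_nth mutated ?p = ?B ! h"
  proof (cases "h < j")
    case True
    have "cyclic_nth mutated ?p = cyclic_nth mutated (i + length \<eta> + (length v - 1 - j + h))"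
      by (simp only: add.assoc)
    also have "\<dots> = cyclic_nth v (i + 1 + (length v - 1 - j + h))"
      using True assms by (intro cyclic_nth_mutated_after) linarith
    also have "i + 1 + (length v - 1 - j + h) = i + length v - j + h"
      using assms by linarith
    finally show ?thesis using True assms by (simp add: x_def nth_append)
  next
    case False
    have "?p = i + (h - j) + length mutated" using False assms length_mutated by simp
    then have "cyclic_nth mutated ?p = cyclic_nth mutated (i + (h - j))"
      by (metis cyclic_nth_add_length)
    also have "\<dots> = (if h - j < length \<eta> then \<eta> ! (h - j)
                      else cyclic_nth v (i + 1 + (h - j - length \<eta>)))"
      using h assms length_mutated by (intro cyclic_nth_mutated) simp
    also have "cyclic_nth v (i + 1 + (h - j - length \<eta>))
             = cyclic_nth v (i + length v - j + (Suc j + (h - j - length \<eta>)))"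
    proof -
      have "i + length v - j + (Suc j + (h - j - length \<eta>)) = i + 1 + (h - j - length \<eta>) + length v"
        using False assms by linarith
      then show ?thesis by (simp only: cyclic_nth_add_length)
    qed
    finally have "cyclic_nth mutated ?p = (if h - j < length \<eta> then \<eta> ! (h - j)
        else cyclic_nth v (i + length v - j + (Suc j + (h - j - length \<eta>))))" .
    moreover have "\<not> h - j < length \<eta> \<Longrightarrow> Suc j + (h - j - length \<eta>) < k"
      using h length_eta_pos by linarith
    ultimately show ?thesis
      using False assms by (simp add: x_def nth_append)
  qed
  then show "?A ! h = take k ?B ! h" using h by (simp del: take_append)
qed

lemma cyclic_window_mutated_from_inserted:
  assumes "j < length \<eta>" "1 \<le> k" "k \<le> length v"
  shows "cyclic_window k mutated (i + length \<eta> + (length v - 1 + j))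
       = take k (drop j (\<eta> @ drop 1 (cyclic_window k v i)))"
    (is "?A = take k ?B")
proof (rule nth_equalityI)
  show "length ?A = length (take k ?B)" using assms by simp
next
  fix h assume "h < length ?A"
  then have h: "h < k" by simp
  have "i + length \<eta> + (length v - 1 + j) + h = i + (j + h) + length mutated"
    using assms length_mutated by simp
  then have "cyclic_nth mutated (i + length \<eta> + (length v - 1 + j) + h) = cyclic_nth mutated (i + (j + h))"
    by (metis cyclic_nth_add_length)
  also have "\<dots> = (if j + h < length \<eta> then \<eta> ! (j + h) else cyclic_nth v (i + 1 + (j + h - length \<eta>)))"
    using h assms length_mutated by (intro cyclic_nth_mutated) simp
  also have "\<dots> = ?B ! h"
    using h assms by (auto simp: nth_append ac_simps)
  finally show "?A ! h = take k ?B ! h" using h by (simp del: take_append)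
qed

lemma sum_cyclic_window_mutated:
  assumes "1 \<le> k" "k \<le> length v"
  shows "(\<Sum>q<length mutated. of_bool (cyclic_window k mutated q = u))
       = (\<Sum>t<length v - k. of_bool (cyclic_window k v (i + 1 + t) = u)) + new_windows k v i \<eta> u"
proof -
  define g where "g q = (of_bool (cyclic_window k mutated q = u) :: real)" for q
  have split: "length mutated = (length v - k) + ((k - 1) + length \<eta>)"
    using length_mutated assms by simp
  \<comment> \<open>start reading just behind \<open>\<eta>\<close>: first the unaffected windows, then those meeting \<open>\<eta>\<close>\<close>
  have "(\<Sum>q<length mutated. g q) = (\<Sum>t<length mutated. g (t + (i + length \<eta>)))"
    by (rule sum_lessThan_shift_periodic[symmetric]) (simp add: g_def)
  also have "\<dots> = (\<Sum>t<length v - k. g (t + (i + length \<eta>)))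
      + (\<Sum>t<k - 1. g (length v - k + t + (i + length \<eta>)))
      + (\<Sum>t<length \<eta>. g (length v - k + (k - 1 + t) + (i + length \<eta>)))"
    unfolding split sum_lessThan_add by (simp add: add.assoc)
  also have "(\<Sum>t<length v - k. g (t + (i + length \<eta>)))
      = (\<Sum>t<length v - k. of_bool (cyclic_window k v (i + 1 + t) = u))"
  proof (intro sum.cong refl)
    fix t assume "t \<in> {..<length v - k}"
    then have "cyclic_window k mutated (i + length \<eta> + t) = cyclic_window k v (i + 1 + t)"
      using assms by (intro cyclic_window_mutated_after) auto
    then show "g (t + (i + length \<eta>)) = of_bool (cyclic_window k v (i + 1 + t) = u)"
      by (simp add: g_def add.commute)
  qed
  also have "(\<Sum>t<k - 1. g (length v - k + t + (i + length \<eta>)))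
      = (\<Sum>j\<in>{1..k-1}. let x = cyclic_window k v (i + length v - j) in
           of_bool (take k (take j x @ \<eta> @ drop (Suc j) x) = u))"
    unfolding sum_lessThan_pred_reflect
  proof (rule sum.cong[OF refl])
    fix j assume j: "j \<in> {1..k-1}"
    have "length v - k + (k - 1 - j) + (i + length \<eta>) = i + length \<eta> + (length v - 1 - j)"
      using j assms by auto
    then have "cyclic_window k mutated (length v - k + (k - 1 - j) + (i + length \<eta>))
        = (let x = cyclic_window k v (i + length v - j) in take k (take j x @ \<eta> @ drop (Suc j) x))"
      using j assms by (simp only: Let_def) (intro cyclic_window_mutated_through, auto)
    then show "g (length v - k + (k - 1 - j) + (i + length \<eta>)) = (let x = cyclic_window k v (i + length v - j) in
           of_bool (take k (take j x @ \<eta> @ drop (Suc j) x) = u))"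
      by (simp add: g_def Let_def)
  qed
  also have "(\<Sum>t<length \<eta>. g (length v - k + (k - 1 + t) + (i + length \<eta>)))
      = (\<Sum>j<length \<eta>. of_bool (take k (drop j (\<eta> @ drop 1 (cyclic_window k v i))) = u))"
  proof (rule sum.cong[OF refl])
    fix j assume j: "j \<in> {..<length \<eta>}"
    have "length v - k + (k - 1 + j) + (i + length \<eta>) = i + length \<eta> + (length v - 1 + j)"
      using assms by auto
    then have "cyclic_window k mutated (length v - k + (k - 1 + j) + (i + length \<eta>))
        = take k (drop j (\<eta> @ drop 1 (cyclic_window k v i)))"
      using j assms by (simp only:) (intro cyclic_window_mutated_from_inserted, auto)
    then show "g (length v - k + (k - 1 + j) + (i + length \<eta>))
        = of_bool (take k (drop j (\<eta> @ drop 1 (cyclic_window k v i))) = u)"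
      by (simp add: g_def)
  qed
  finally show ?thesis by (simp add: g_def new_windows_def add.assoc)
qed

lemma ct_mutated:
  assumes "1 \<le> k" "k \<le> length v" "length u = k"
  shows "real (ct mutated u) = real (ct v u) - lost_windows k v i u + new_windows k v i \<eta> u"
  using assms sum_cyclic_window_mutated sum_cyclic_window_split[of k v u i]
  by (simp add: ct_eq_sum_cyclic_window)

end

section \<open>Expected counts after one mutation step\<close>

lemma sum_letters_delta:
  fixes g :: "nat list \<Rightarrow> real" and P :: "nat \<Rightarrow> nat list pmf" and a d :: nat
  assumes "a < d"
  shows "(\<Sum>t<d. \<Sum>\<eta>\<in>set_pmf (P t). pmf (P t) \<eta> * (if a = t then g \<eta> else 0))
       = (\<Sum>\<eta>\<in>set_pmf (P a). pmf (P a) \<eta> * g \<eta>)"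
proof -
  have "(\<Sum>t<d. \<Sum>\<eta>\<in>set_pmf (P t). pmf (P t) \<eta> * (if a = t then g \<eta> else 0))
      = (\<Sum>t<d. if a = t then \<Sum>\<eta>\<in>set_pmf (P t). pmf (P t) \<eta> * g \<eta> else 0)"
    by (intro sum.cong refl) auto
  also have "\<dots> = (\<Sum>\<eta>\<in>set_pmf (P a). pmf (P a) \<eta> * g \<eta>)"
    using assms by (subst sum.delta') auto
  finally show ?thesis .
qed

lemma subst_matrix_by_position:
  assumes "x ! 0 < d" and "\<And>j. j \<in> {1..k-1} \<Longrightarrow> x ! j < d"
  shows "subst_matrix d k P u x =
     (\<Sum>j\<in>{1..k-1}. \<Sum>\<eta>\<in>set_pmf (P (x!j)). pmf (P (x!j)) \<eta> *
        of_bool (take k (take j x @ \<eta> @ drop (Suc j) x) = u))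
   + (\<Sum>\<eta>\<in>set_pmf (P (x!0)). pmf (P (x!0)) \<eta> *
        (\<Sum>j<length \<eta>. of_bool (take k (drop j (\<eta> @ drop 1 x)) = u)))"
proof -
  define B where "B j \<eta> = (of_bool (take k (take j x @ \<eta> @ drop (Suc j) x) = u) :: real)" for j \<eta>
  define C where "C \<eta> = (\<Sum>j<length \<eta>. of_bool (take k (drop j (\<eta> @ drop 1 x)) = u) :: real)" for \<eta>
  have "subst_matrix d k P u x
      = (\<Sum>t<d. \<Sum>\<eta>\<in>set_pmf (P t). \<Sum>j\<in>{1..k-1}. pmf (P t) \<eta> * (if x ! j = t then B j \<eta> else 0))
      + (\<Sum>t<d. \<Sum>\<eta>\<in>set_pmf (P t). pmf (P t) \<eta> * (if x ! 0 = t then C \<eta> else 0))"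
    unfolding subst_matrix_def B_def C_def of_bool_def sum.distrib[symmetric] sum_distrib_left[symmetric]
      distrib_left[symmetric]
    by (intro sum.cong refl arg_cong2[where f = "(*)"] arg_cong2[where f = "(+)"]) auto
  also have "(\<Sum>t<d. \<Sum>\<eta>\<in>set_pmf (P t). \<Sum>j\<in>{1..k-1}. pmf (P t) \<eta> * (if x ! j = t then B j \<eta> else 0))
      = (\<Sum>j\<in>{1..k-1}. \<Sum>t<d. \<Sum>\<eta>\<in>set_pmf (P t). pmf (P t) \<eta> * (if x ! j = t then B j \<eta> else 0))"
    by (subst sum.swap) (simp only: sum.swap[of _ "{1..k-1}"])
  also have "\<dots> = (\<Sum>j\<in>{1..k-1}. \<Sum>\<eta>\<in>set_pmf (P (x!j)). pmf (P (x!j)) \<eta> * B j \<eta>)"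
    using assms(2) by (intro sum.cong[OF refl] sum_letters_delta) auto
  also have "(\<Sum>t<d. \<Sum>\<eta>\<in>set_pmf (P t). pmf (P t) \<eta> * (if x ! 0 = t then C \<eta> else 0))
      = (\<Sum>\<eta>\<in>set_pmf (P (x!0)). pmf (P (x!0)) \<eta> * C \<eta>)"
    by (rule sum_letters_delta[OF assms(1)])
  finally show ?thesis unfolding B_def C_def .
qed

lemma expectation_mutation_step:
  fixes f :: "nat list \<Rightarrow> real"
  assumes "v \<noteq> []" and "\<And>i. i < length v \<Longrightarrow> finite (set_pmf (P (v ! i)))"
  shows "measure_pmf.expectation (mutation_step P v) f * real (length v)
       = (\<Sum>i<length v. \<Sum>\<eta>\<in>set_pmf (P (v ! i)). pmf (P (v ! i)) \<eta> * f (take i v @ \<eta> @ drop (Suc i) v))"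
proof -
  have "measure_pmf.expectation (mutation_step P v) f
      = (\<Sum>i<length v. measure_pmf.expectation
           (map_pmf (\<lambda>\<eta>. take i v @ \<eta> @ drop (Suc i) v) (P (v ! i))) f /\<^sub>R real (card {..<length v}))"
    unfolding mutation_step_def by (rule pmf_expectation_bind_pmf_of_set) (use assms in auto)
  also have "\<dots> = (\<Sum>i<length v. (\<Sum>\<eta>\<in>set_pmf (P (v ! i)).
                      pmf (P (v ! i)) \<eta> * f (take i v @ \<eta> @ drop (Suc i) v)) / real (length v))"
  proof (intro sum.cong refl)
    fix i assume "i \<in> {..<length v}"
    then show "measure_pmf.expectation (map_pmf (\<lambda>\<eta>. take i v @ \<eta> @ drop (Suc i) v) (P (v ! i))) f
          /\<^sub>R real (card {..<length v})
        = (\<Sum>\<eta>\<in>set_pmf (P (v ! i)). pmf (P (v ! i)) \<eta> * f (take i v @ \<eta> @ drop (Suc i) v)) / real (length v)"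
      using assms(2) by (simp add: integral_measure_pmf_real[of "set_pmf (P (v ! i))"]
          divide_inverse_commute ac_simps)
  qed
  finally show ?thesis using assms(1) by (simp add: sum_divide_distrib[symmetric])
qed

lemma sum_lost_windows:
  assumes "k \<le> length v" "length u = k"
  shows "(\<Sum>i<length v. lost_windows k v i u) = real k * real (ct v u)"
proof -
  have "(\<Sum>i<length v. lost_windows k v i u)
      = (\<Sum>j<k. \<Sum>i<length v. of_bool (cyclic_window k v (i + (length v - j)) = u))"
    unfolding lost_windows_def using assms by (subst sum.swap) (intro sum.cong refl, auto)
  also have "\<dots> = (\<Sum>j<k. real (ct v u))"
    unfolding ct_eq_sum_cyclic_window[OF assms(2)]
    by (intro sum.cong refl sum_lessThan_shift_periodic) simp
  finally show ?thesis by simp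
qed

lemma subst_matrix_cyclic_window:
  assumes "set v \<subseteq> {..<d}" "1 \<le> k" "p < length v"
  defines "x \<equiv> cyclic_window k v p"
  shows "subst_matrix d k P u x =
     (\<Sum>j\<in>{1..k-1}. \<Sum>\<eta>\<in>set_pmf (P (cyclic_nth v (p + j))). pmf (P (cyclic_nth v (p + j))) \<eta> *
        of_bool (take k (take j x @ \<eta> @ drop (Suc j) x) = u))
   + (\<Sum>\<eta>\<in>set_pmf (P (v ! p)). pmf (P (v ! p)) \<eta> *
        (\<Sum>j<length \<eta>. of_bool (take k (drop j (\<eta> @ drop 1 x)) = u)))"
proof -
  have "v \<noteq> []" using assms(3) by auto
  then have letters: "cyclic_nth v n < d" for n
    using cyclic_nth_in_set assms(1) by blast
  have first: "x ! 0 = v ! p" using assms(2,3) by (simp add: x_def cyclic_nth_def)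
  have "subst_matrix d k P u x =
     (\<Sum>j\<in>{1..k-1}. \<Sum>\<eta>\<in>set_pmf (P (x ! j)). pmf (P (x ! j)) \<eta> *
        of_bool (take k (take j x @ \<eta> @ drop (Suc j) x) = u))
   + (\<Sum>\<eta>\<in>set_pmf (P (x ! 0)). pmf (P (x ! 0)) \<eta> *
        (\<Sum>j<length \<eta>. of_bool (take k (drop j (\<eta> @ drop 1 x)) = u)))"
    using assms(2) letters by (intro subst_matrix_by_position) (auto simp: x_def)
  also have "\<dots> = (\<Sum>j\<in>{1..k-1}. \<Sum>\<eta>\<in>set_pmf (P (cyclic_nth v (p + j))). pmf (P (cyclic_nth v (p + j))) \<eta> *
        of_bool (take k (take j x @ \<eta> @ drop (Suc j) x) = u))
   + (\<Sum>\<eta>\<in>set_pmf (P (v ! p)). pmf (P (v ! p)) \<eta> *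
        (\<Sum>j<length \<eta>. of_bool (take k (drop j (\<eta> @ drop 1 x)) = u)))"
    unfolding first by (intro arg_cong2[where f = "(+)"] sum.cong refl) (auto simp: x_def)
  finally show ?thesis .
qed

lemma sum_subst_matrix_ct:
  assumes "set v \<subseteq> {..<d}" "1 \<le> k" "k \<le> length v"
  shows "(\<Sum>x\<in>words d k. subst_matrix d k P u x * real (ct v x))
       = (\<Sum>i<length v. \<Sum>\<eta>\<in>set_pmf (P (v ! i)). pmf (P (v ! i)) \<eta> * new_windows k v i \<eta> u)"
proof -
  let ?L = "length v" and ?x = "cyclic_window k v"
  define X where "X p j \<eta> = (of_bool (take k (take j (?x p) @ \<eta> @ drop (Suc j) (?x p)) = u) :: real)"
    for p j \<eta>
  define Y where "Y p \<eta> = (\<Sum>j<length \<eta>. of_bool (take k (drop j (\<eta> @ drop 1 (?x p))) = u) :: real)"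
    for p \<eta>
  have reindex: "(\<Sum>p<?L. \<Sum>\<eta>\<in>set_pmf (P (cyclic_nth v (p + j))). pmf (P (cyclic_nth v (p + j))) \<eta> * X p j \<eta>)
      = (\<Sum>i<?L. \<Sum>\<eta>\<in>set_pmf (P (v ! i)). pmf (P (v ! i)) \<eta> * X (i + ?L - j) j \<eta>)"
    if "j \<in> {1..k-1}" for j
    using that assms(3)
    by (intro sum_cyclic_nth_reindex[where G = "\<lambda>p a. \<Sum>\<eta>\<in>set_pmf (P a). pmf (P a) \<eta> * X p j \<eta>"])
       (auto simp: X_def)
  have "v \<noteq> []" using assms by auto
  then have "(\<Sum>x\<in>words d k. subst_matrix d k P u x * real (ct v x)) = (\<Sum>p<?L. subst_matrix d k P u (?x p))"
    using sum_words_mult_ct[of k v d] cyclic_window_in_words[OF assms(1)] by simp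
  also have "\<dots> = (\<Sum>j\<in>{1..k-1}. \<Sum>p<?L. \<Sum>\<eta>\<in>set_pmf (P (cyclic_nth v (p + j))).
                                     pmf (P (cyclic_nth v (p + j))) \<eta> * X p j \<eta>)
                 + (\<Sum>p<?L. \<Sum>\<eta>\<in>set_pmf (P (v ! p)). pmf (P (v ! p)) \<eta> * Y p \<eta>)"
    using assms(1,2) by (simp add: subst_matrix_cyclic_window X_def Y_def sum.distrib sum.swap[of _ "{..<?L}"])
  also have "(\<Sum>j\<in>{1..k-1}. \<Sum>p<?L. \<Sum>\<eta>\<in>set_pmf (P (cyclic_nth v (p + j))).
                                     pmf (P (cyclic_nth v (p + j))) \<eta> * X p j \<eta>)
      = (\<Sum>j\<in>{1..k-1}. \<Sum>i<?L. \<Sum>\<eta>\<in>set_pmf (P (v ! i)). pmf (P (v ! i)) \<eta> * X (i + ?L - j) j \<eta>)"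
    by (rule sum.cong[OF refl]) (rule reindex)
  also have "\<dots> = (\<Sum>i<?L. \<Sum>\<eta>\<in>set_pmf (P (v ! i)). pmf (P (v ! i)) \<eta> * (\<Sum>j\<in>{1..k-1}. X (i + ?L - j) j \<eta>))"
    unfolding sum_distrib_left by (subst sum.swap) (rule sum.cong[OF refl], rule sum.swap)
  finally show ?thesis
    by (simp add: new_windows_def X_def Y_def Let_def distrib_left sum.distrib)
qed

lemma expected_ct_mutation_step:
  assumes law: "mutation_law d P" and letters: "set v \<subseteq> {..<d}"
    and k: "1 \<le> k" "k \<le> length v" and u: "u \<in> words d k"
  shows "measure_pmf.expectation (mutation_step P v) (\<lambda>v'. real (ct v' u)) * real (length v)
     = (real (length v) - real k) * real (ct v u)
       + (\<Sum>x\<in>words d k. subst_matrix d k P u x * real (ct v x))"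
proof -
  let ?L = "length v" and ?P = "\<lambda>i. P (v ! i)"
  have lu: "length u = k" using u by (simp add: words_def)
  have letter: "v ! i < d" if "i < ?L" for i using letters that nth_mem by blast
  have fin: "finite (set_pmf (?P i))" if "i < ?L" for i
    using law letter[OF that] by (simp add: mutation_law_def)
  have ct_mut: "real (ct (take i v @ \<eta> @ drop (Suc i) v) u)
      = real (ct v u) - lost_windows k v i u + new_windows k v i \<eta> u"
    if i: "i < ?L" and \<eta>: "\<eta> \<in> set_pmf (?P i)" for i \<eta>
  proof -
    interpret single_mutation v \<eta> i
      using i \<eta> law letter[OF i] by unfold_locales (auto simp: mutation_law_def)
    show ?thesis using ct_mutated[OF k lu] by (simp add: mutated_def)
  qed
  have "measure_pmf.expectation (mutation_step P v) (\<lambda>v'. real (ct v' u)) * real ?L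
      = (\<Sum>i<?L. \<Sum>\<eta>\<in>set_pmf (?P i). pmf (?P i) \<eta> * real (ct (take i v @ \<eta> @ drop (Suc i) v) u))"
    using k fin by (intro expectation_mutation_step) auto
  also have "\<dots> = (\<Sum>i<?L. (real (ct v u) - lost_windows k v i u) * (\<Sum>\<eta>\<in>set_pmf (?P i). pmf (?P i) \<eta>)
                 + (\<Sum>\<eta>\<in>set_pmf (?P i). pmf (?P i) \<eta> * new_windows k v i \<eta> u))"
  proof (rule sum.cong[OF refl])
    fix i assume "i \<in> {..<?L}"
    then have "(\<Sum>\<eta>\<in>set_pmf (?P i). pmf (?P i) \<eta> * real (ct (take i v @ \<eta> @ drop (Suc i) v) u))
        = (\<Sum>\<eta>\<in>set_pmf (?P i). (real (ct v u) - lost_windows k v i u) * pmf (?P i) \<eta>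
                                      + pmf (?P i) \<eta> * new_windows k v i \<eta> u)"
      by (intro sum.cong refl) (simp add: ct_mut algebra_simps)
    then show "(\<Sum>\<eta>\<in>set_pmf (?P i). pmf (?P i) \<eta> * real (ct (take i v @ \<eta> @ drop (Suc i) v) u))
        = (real (ct v u) - lost_windows k v i u) * (\<Sum>\<eta>\<in>set_pmf (?P i). pmf (?P i) \<eta>)
          + (\<Sum>\<eta>\<in>set_pmf (?P i). pmf (?P i) \<eta> * new_windows k v i \<eta> u)"
      by (simp add: sum.distrib sum_distrib_left)
  qed
  also have "\<dots> = (\<Sum>i<?L. real (ct v u) - lost_windows k v i u)
                 + (\<Sum>i<?L. \<Sum>\<eta>\<in>set_pmf (?P i). pmf (?P i) \<eta> * new_windows k v i \<eta> u)"
    using fin by (simp add: sum_pmf_eq_1 sum.distrib)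
  finally show ?thesis
    using sum_lost_windows[OF k(2) lu] sum_subst_matrix_ct[OF letters k]
    by (simp add: sum_subtractf algebra_simps)
qed

section \<open>The mutation system\<close>

lemma set_pmf_mutation_step:
  assumes "v \<noteq> []"
  shows "set_pmf (mutation_step P v)
       = (\<Union>i<length v. (\<lambda>\<eta>. take i v @ \<eta> @ drop (Suc i) v) ` set_pmf (P (v ! i)))"
proof -
  have "set_pmf (pmf_of_set {..<length v}) = {..<length v}"
    using assms by (intro set_pmf_of_set) auto
  then show ?thesis by (simp add: mutation_step_def)
qed

lemma tau_mutation_law_ge_1:
  assumes "tau_mutation_law d \<tau> P" "set w \<subseteq> {..<d}" "w \<noteq> []"
  shows "1 \<le> \<tau>"
proof -
  have "hd w < d" using assms(2,3) hd_in_set by blast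
  moreover obtain \<eta> where "\<eta> \<in> set_pmf (P (hd w))" using set_pmf_not_empty by fast
  ultimately have "\<eta> \<noteq> []" "length \<eta> = \<tau>"
    using assms unfolding tau_mutation_law_def mutation_law_def by auto
  then show ?thesis by (cases \<eta>) auto
qed

lemma mutation_step_support:
  assumes "tau_mutation_law d \<tau> P" "set v \<subseteq> {..<d}" "v \<noteq> []"
  shows "finite (set_pmf (mutation_step P v))"
    and "v' \<in> set_pmf (mutation_step P v) \<Longrightarrow> length v' = length v + (\<tau> - 1) \<and> set v' \<subseteq> {..<d}"
proof -
  have letter: "v ! i < d" if "i < length v" for i using assms(2) that nth_mem by blast
  show "finite (set_pmf (mutation_step P v))"
    using assms(1,3) letter by (auto simp: set_pmf_mutation_step tau_mutation_law_def mutation_law_def)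
  assume "v' \<in> set_pmf (mutation_step P v)"
  then obtain i \<eta> where i: "i < length v" and \<eta>: "\<eta> \<in> set_pmf (P (v ! i))"
    and v': "v' = take i v @ \<eta> @ drop (Suc i) v"
    using assms(3) by (auto simp: set_pmf_mutation_step)
  have "length \<eta> = \<tau>" "\<eta> \<noteq> []" "set \<eta> \<subseteq> {..<d}"
    using assms(1) letter[OF i] \<eta> by (auto simp: tau_mutation_law_def mutation_law_def)
  then show "length v' = length v + (\<tau> - 1) \<and> set v' \<subseteq> {..<d}"
    using v' i assms(2) set_take_subset[of i v] set_drop_subset[of "Suc i" v]
    by (cases \<eta>) auto
qed

lemma mutation_system_support:
  assumes "tau_mutation_law d \<tau> P" "set w \<subseteq> {..<d}" "w \<noteq> []"
  shows "finite (set_pmf (mutation_system P w n))"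
    and "v \<in> set_pmf (mutation_system P w n) \<Longrightarrow> length v = length w + n * (\<tau> - 1) \<and> set v \<subseteq> {..<d}"
proof -
  have "finite (set_pmf (mutation_system P w n)) \<and>
    (\<forall>v\<in>set_pmf (mutation_system P w n). length v = length w + n * (\<tau> - 1) \<and> set v \<subseteq> {..<d})"
  proof (induction n)
    case (Suc n)
    have step: "finite (set_pmf (mutation_step P v))
        \<and> (\<forall>v'\<in>set_pmf (mutation_step P v). length v' = length w + Suc n * (\<tau> - 1) \<and> set v' \<subseteq> {..<d})"
      if "v \<in> set_pmf (mutation_system P w n)" for v
    proof -
      have "length v = length w + n * (\<tau> - 1)" "set v \<subseteq> {..<d}" "v \<noteq> []"
        using Suc.IH that assms(3) by auto
      then show ?thesis using mutation_step_support[OF assms(1)] by simp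
    qed
    show ?case using Suc.IH step by auto
  qed (use assms(2) in simp)
  then show "finite (set_pmf (mutation_system P w n))"
    and "v \<in> set_pmf (mutation_system P w n) \<Longrightarrow> length v = length w + n * (\<tau> - 1) \<and> set v \<subseteq> {..<d}"
    by auto
qed

definition expected_ct :: "(nat \<Rightarrow> nat list pmf) \<Rightarrow> nat list \<Rightarrow> nat \<Rightarrow> wvec" where
  "expected_ct P w n = (\<lambda>u. measure_pmf.expectation (mutation_system P w n) (\<lambda>v. real (ct v u)))"

lemma expected_ct_0: "expected_ct P w 0 u = real (ct w u)"
  by (simp add: expected_ct_def integral_measure_pmf_real[of "{w}"])

lemma expectation_mutation_system:
  fixes f :: "nat list \<Rightarrow> real"
  assumes "tau_mutation_law d \<tau> P" "set w \<subseteq> {..<d}" "w \<noteq> []"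
  shows "measure_pmf.expectation (mutation_system P w n) f
       = (\<Sum>v\<in>set_pmf (mutation_system P w n). pmf (mutation_system P w n) v * f v)"
  using mutation_system_support(1)[OF assms]
  by (subst integral_measure_pmf_real[of "set_pmf (mutation_system P w n)"]) (auto simp: ac_simps)

lemma expectation_mutation_system_Suc:
  fixes f :: "nat list \<Rightarrow> real"
  assumes law: "tau_mutation_law d \<tau> P" and w: "set w \<subseteq> {..<d}" "w \<noteq> []"
  shows "measure_pmf.expectation (mutation_system P w (Suc n)) f
       = (\<Sum>v\<in>set_pmf (mutation_system P w n).
            pmf (mutation_system P w n) v * measure_pmf.expectation (mutation_step P v) f)"
proof -
  have "finite (set_pmf (mutation_step P v))" if "v \<in> set_pmf (mutation_system P w n)" for v
  proof (rule mutation_step_support(1)[OF law])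
    show "set v \<subseteq> {..<d}" "v \<noteq> []"
      using mutation_system_support(2)[OF law w that] w(2) by auto
  qed
  then show ?thesis
    unfolding mutation_system.simps
    by (subst pmf_expectation_bind[OF mutation_system_support(1)[OF law w]]) auto
qed

lemma expected_ct_Suc:
  assumes law: "tau_mutation_law d \<tau> P" and w: "set w \<subseteq> {..<d}" "w \<noteq> []"
    and k: "1 \<le> k" "k \<le> length w" and u: "u \<in> words d k"
  shows "expected_ct P w (Suc n) u * real (length w + n * (\<tau> - 1))
    = (real (length w + n * (\<tau> - 1)) - real k) * expected_ct P w n u
      + wmat_vec d k (subst_matrix d k P) (expected_ct P w n) u"
proof -
  let ?S = "mutation_system P w n" and ?m = "length w + n * (\<tau> - 1)"
  have support: "length v = ?m" "set v \<subseteq> {..<d}" if "v \<in> set_pmf ?S" for v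
    using mutation_system_support(2)[OF law w that] by auto
  have step_law: "mutation_law d P" using law by (simp add: tau_mutation_law_def)
  have "expected_ct P w (Suc n) u * real ?m
      = (\<Sum>v\<in>set_pmf ?S. pmf ?S v *
          (measure_pmf.expectation (mutation_step P v) (\<lambda>v'. real (ct v' u)) * real (length v)))"
    unfolding expected_ct_def expectation_mutation_system_Suc[OF law w]
    using support by (simp add: sum_distrib_right mult.assoc)
  also have "\<dots> = (\<Sum>v\<in>set_pmf ?S. pmf ?S v * ((real ?m - real k) * real (ct v u)
                    + (\<Sum>x\<in>words d k. subst_matrix d k P u x * real (ct v x))))"
  proof (rule sum.cong[OF refl])
    fix v assume "v \<in> set_pmf ?S"
    then show "pmf ?S v * (measure_pmf.expectation (mutation_step P v) (\<lambda>v'. real (ct v' u)) * real (length v))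
        = pmf ?S v * ((real ?m - real k) * real (ct v u)
                    + (\<Sum>x\<in>words d k. subst_matrix d k P u x * real (ct v x)))"
      using support[of v] k expected_ct_mutation_step[OF step_law _ k(1) _ u, of v] by simp
  qed
  also have "\<dots> = (real ?m - real k) * (\<Sum>v\<in>set_pmf ?S. pmf ?S v * real (ct v u))
      + (\<Sum>x\<in>words d k. subst_matrix d k P u x * (\<Sum>v\<in>set_pmf ?S. pmf ?S v * real (ct v x)))"
  proof -
    have "(\<Sum>v\<in>set_pmf ?S. pmf ?S v * (\<Sum>x\<in>words d k. subst_matrix d k P u x * real (ct v x)))
        = (\<Sum>x\<in>words d k. \<Sum>v\<in>set_pmf ?S. subst_matrix d k P u x * (pmf ?S v * real (ct v x)))"
      by (subst sum.swap) (simp add: sum_distrib_left ac_simps)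
    then show ?thesis
      by (simp add: distrib_left sum.distrib sum_distrib_left ac_simps)
  qed
  finally show ?thesis
    unfolding expected_ct_def expectation_mutation_system[OF law w] wmat_vec_def .
qed

section \<open>The product formula\<close>

lemma wmat_vec_cong:
  "(\<And>v. v \<in> words d k \<Longrightarrow> y v = y' v) \<Longrightarrow> wmat_vec d k C y u = wmat_vec d k C y' u"
  unfolding wmat_vec_def by (intro sum.cong refl) simp

lemma wmat_vec_wmat_mult:
  "wmat_vec d k (wmat_mult d k B C) x u = wmat_vec d k B (wmat_vec d k C x) u"
proof -
  have "wmat_vec d k (wmat_mult d k B C) x u = (\<Sum>v\<in>words d k. \<Sum>y\<in>words d k. B u y * (C y v * x v))"
    unfolding wmat_vec_def wmat_mult_def by (simp add: sum_distrib_right mult.assoc)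
  also have "\<dots> = wmat_vec d k B (wmat_vec d k C x) u"
    unfolding wmat_vec_def by (subst sum.swap) (simp add: sum_distrib_left)
  finally show ?thesis .
qed

lemma wmat_vec_wmat_id: "u \<in> words d k \<Longrightarrow> wmat_vec d k wmat_id y u = y u"
proof -
  assume "u \<in> words d k"
  have "wmat_vec d k wmat_id y u = (\<Sum>v\<in>words d k. if u = v then y v else 0)"
    unfolding wmat_vec_def wmat_id_def by (intro sum.cong refl) simp
  also have "\<dots> = y u" using \<open>u \<in> words d k\<close> finite_words by (simp add: sum.delta)
  finally show ?thesis .
qed

lemma wmat_vec_affine:
  assumes "u \<in> words d k"
  shows "wmat_vec d k (\<lambda>x y. a * (M x y + b * wmat_id x y)) z u = a * (wmat_vec d k M z u + b * z u)"
proof -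
  have "wmat_vec d k (\<lambda>x y. a * (M x y + b * wmat_id x y)) z u
      = a * (wmat_vec d k M z u + b * wmat_vec d k wmat_id z u)"
    unfolding wmat_vec_def by (simp add: sum.distrib sum_distrib_left algebra_simps)
  then show ?thesis using wmat_vec_wmat_id[OF assms] by simp
qed

lemma wmat_vec_affine_commute:
  assumes "u \<in> words d k"
  shows "wmat_vec d k (\<lambda>x y. a1 * (M x y + b1 * wmat_id x y)) (wmat_vec d k (\<lambda>x y. a2 * (M x y + b2 * wmat_id x y)) z) u
       = wmat_vec d k (\<lambda>x y. a2 * (M x y + b2 * wmat_id x y)) (wmat_vec d k (\<lambda>x y. a1 * (M x y + b1 * wmat_id x y)) z) u"
proof -
  have expand: "wmat_vec d k (\<lambda>x y. a1 * (M x y + b1 * wmat_id x y)) (wmat_vec d k (\<lambda>x y. a2 * (M x y + b2 * wmat_id x y)) z) u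
     = a1 * a2 * (wmat_vec d k M (wmat_vec d k M z) u + (b1 + b2) * wmat_vec d k M z u + b1 * b2 * z u)"
    for a1 b1 a2 b2
  proof -
    have "wmat_vec d k M (wmat_vec d k (\<lambda>x y. a2 * (M x y + b2 * wmat_id x y)) z) u
       = wmat_vec d k M (\<lambda>v. a2 * (wmat_vec d k M z v + b2 * z v)) u"
      by (rule wmat_vec_cong) (simp add: wmat_vec_affine)
    also have "\<dots> = a2 * (wmat_vec d k M (wmat_vec d k M z) u + b2 * wmat_vec d k M z u)"
      unfolding wmat_vec_def by (simp add: sum.distrib sum_distrib_left algebra_simps)
    finally have inner: "wmat_vec d k M (wmat_vec d k (\<lambda>x y. a2 * (M x y + b2 * wmat_id x y)) z) u
      = a2 * (wmat_vec d k M (wmat_vec d k M z) u + b2 * wmat_vec d k M z u)" .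
    have "wmat_vec d k (\<lambda>x y. a1 * (M x y + b1 * wmat_id x y)) (wmat_vec d k (\<lambda>x y. a2 * (M x y + b2 * wmat_id x y)) z) u
        = a1 * (wmat_vec d k M (wmat_vec d k (\<lambda>x y. a2 * (M x y + b2 * wmat_id x y)) z) u
            + b1 * (a2 * (wmat_vec d k M z u + b2 * z u)))"
      using assms by (simp add: wmat_vec_affine)
    then show ?thesis unfolding inner by (simp add: algebra_simps)
  qed
  show ?thesis unfolding expand by (simp add: algebra_simps)
qed

lemma wmat_vec_wmat_prod_commute:
  assumes commute: "\<And>j x u. u \<in> words d k \<Longrightarrow>
      wmat_vec d k (A j) (wmat_vec d k B x) u = wmat_vec d k B (wmat_vec d k (A j) x) u"
  shows "u \<in> words d k \<Longrightarrow>
      wmat_vec d k (wmat_prod d k A n) (wmat_vec d k B x) u = wmat_vec d k B (wmat_vec d k (wmat_prod d k A n) x) u"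
proof (induction n arbitrary: x u)
  case 0
  have "wmat_vec d k B (wmat_vec d k wmat_id x) u = wmat_vec d k B x u"
    by (rule wmat_vec_cong) (simp add: wmat_vec_wmat_id)
  then show ?case using 0 by (simp add: wmat_vec_wmat_id)
next
  case (Suc n)
  have "wmat_vec d k (wmat_prod d k A (Suc n)) (wmat_vec d k B x) u
      = wmat_vec d k (wmat_prod d k A n) (wmat_vec d k (A n) (wmat_vec d k B x)) u"
    by (simp add: wmat_vec_wmat_mult)
  also have "\<dots> = wmat_vec d k (wmat_prod d k A n) (wmat_vec d k B (wmat_vec d k (A n) x)) u"
    by (rule wmat_vec_cong) (rule commute)
  also have "\<dots> = wmat_vec d k B (wmat_vec d k (wmat_prod d k A n) (wmat_vec d k (A n) x)) u"
    by (rule Suc.IH[OF Suc.prems])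
  also have "\<dots> = wmat_vec d k B (wmat_vec d k (wmat_prod d k A (Suc n)) x) u"
    by (rule wmat_vec_cong) (simp add: wmat_vec_wmat_mult)
  finally show ?case .
qed

lemma expected_ct_eq_wmat_prod:
  assumes law: "tau_mutation_law d \<tau> P" and w: "set w \<subseteq> {..<d}" "w \<noteq> []"
    and k: "1 \<le> k" "k \<le> length w" and u: "u \<in> words d k"
  shows "expected_ct P w n u =
         wmat_vec d k
           (wmat_prod d k (\<lambda>j x y. 1 / (real (length w) + real j * (real \<tau> - 1)) *
               (subst_matrix d k P x y
                 + (real (length w) + real j * (real \<tau> - 1) - real k) * wmat_id x y)) n)
           (\<lambda>v. real (ct w v)) u"
  using u
proof (induction n arbitrary: u)
  case 0
  then show ?case by (simp add: expected_ct_0 wmat_vec_wmat_id)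
next
  case (Suc n)
  let ?len = "\<lambda>j::nat. real (length w) + real j * (real \<tau> - 1)"
  let ?A = "\<lambda>j x y. 1 / ?len j * (subst_matrix d k P x y + (?len j - real k) * wmat_id x y)"
  have tau: "1 \<le> \<tau>" by (rule tau_mutation_law_ge_1[OF law w])
  then have len: "real (length w + n * (\<tau> - 1)) = ?len n" by (simp add: of_nat_diff)
  have "0 < ?len n" using w tau by (simp add: add_pos_nonneg)
  then have "expected_ct P w (Suc n) u
      = 1 / ?len n * (wmat_vec d k (subst_matrix d k P) (expected_ct P w n) u
                      + (?len n - real k) * expected_ct P w n u)"
    using expected_ct_Suc[OF law w k Suc.prems, of n] unfolding len by (simp add: field_simps)
  also have "\<dots> = wmat_vec d k (?A n) (expected_ct P w n) u"
    by (rule wmat_vec_affine[symmetric, OF Suc.prems])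
  also have "\<dots> = wmat_vec d k (?A n) (wmat_vec d k (wmat_prod d k ?A n) (\<lambda>v. real (ct w v))) u"
    using Suc.IH by (intro wmat_vec_cong) simp
  also have "\<dots> = wmat_vec d k (wmat_prod d k ?A n) (wmat_vec d k (?A n) (\<lambda>v. real (ct w v))) u"
    \<comment> \<open>the recursion multiplies on the left, \<open>wmat_prod\<close> on the right\<close>
    using Suc.prems by (intro wmat_vec_wmat_prod_commute[symmetric] wmat_vec_affine_commute)
  also have "\<dots> = wmat_vec d k (wmat_prod d k ?A (Suc n)) (\<lambda>v. real (ct w v)) u"
    by (simp add: wmat_vec_wmat_mult)
  finally show ?case .
qed

lemma expected_fr_eq:
  assumes law: "tau_mutation_law d \<tau> P" and w: "set w \<subseteq> {..<d}" "w \<noteq> []"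
  shows "measure_pmf.expectation (mutation_system P w n) (\<lambda>v. fr v u)
       = expected_ct P w n u / (real (length w) + real n * (real \<tau> - 1))"
proof -
  let ?S = "mutation_system P w n"
  have "1 \<le> \<tau>" by (rule tau_mutation_law_ge_1[OF law w])
  then have length: "real (length v) = real (length w) + real n * (real \<tau> - 1)"
    if "v \<in> set_pmf ?S" for v
    using mutation_system_support(2)[OF law w that] by (simp add: of_nat_diff)
  have "(\<Sum>v\<in>set_pmf ?S. pmf ?S v * fr v u)
      = (\<Sum>v\<in>set_pmf ?S. pmf ?S v * real (ct v u)) / (real (length w) + real n * (real \<tau> - 1))"
    unfolding sum_divide_distrib by (intro sum.cong refl) (simp add: fr_def length)
  then show ?thesis unfolding expected_ct_def expectation_mutation_system[OF law w] .
qed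

theorem mainTheorem6:
  fixes d \<tau> k n :: nat and P :: "nat \<Rightarrow> nat list pmf" and w :: "nat list"
  assumes "tau_mutation_law d \<tau> P"
    and "w \<noteq> []" and "set w \<subseteq> {..<d}"
    and "1 \<le> k" and "k \<le> length w"
  shows "\<forall>u\<in>words d k.
     measure_pmf.expectation (mutation_system P w n) (\<lambda>v. fr v u)
       = measure_pmf.expectation (mutation_system P w n) (\<lambda>v. real (ct v u))
           / (real (length w) + real n * (real \<tau> - 1))
   \<and> measure_pmf.expectation (mutation_system P w n) (\<lambda>v. real (ct v u))
           / (real (length w) + real n * (real \<tau> - 1))
       = 1 / (real (length w) + real n * (real \<tau> - 1)) *
         wmat_vec d k
           (wmat_prod d k (\<lambda>j x y. 1 / (real (length w) + real j * (real \<tau> - 1)) *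
               (subst_matrix d k P x y
                 + (real (length w) + real j * (real \<tau> - 1) - real k) * wmat_id x y)) n)
           (\<lambda>v. real (ct w v)) u"
  using expected_fr_eq[OF assms(1,3,2)] expected_ct_eq_wmat_prod[OF assms(1,3,2,4,5)]
  by (simp add: expected_ct_def)

end
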